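(* Consider the coded caching model described in the context on a $\sqrt{n}\times\sqrt{n}$ grid (or torus) with $n$ servers, library size $K=O(n)$, and number of chunks per file $\ell=\Omega(\log n)$. For $1\le j\le K$ let $\tilde{p}_j \triangleq 1-(1-p_j)^{M\ell}$, and assume $\sqrt{\ell/\tilde{p}_j}=o(\sqrt{n})$ for every $j$. Then, with high probability, the communication cost of a request for file $W_j$ is $\Theta\big(\sqrt{\ell/\tilde{p}_j}\big)$, for every $1\le j\le K$. Moreover, $$\mathbb{E}[C]=\sum_{j=1}^K \Theta\Big(\sqrt{\ell/\tilde{p}_j}\Big)\,p_j .$$
   Context: Network: $n$ caching servers forming the nodes of a $\sqrt{n}\times\sqrt{n}$ grid graph $G$ (one may equivalently take the $\sqrt n\times\sqrt n$ torus to avoid boundary effects); $d_G(u,v)$ is the shortest-path distance and $B_r(u)=\{v: d_G(u,v)\le r\}$. Library: $K$ files $W_1,\dots,W_K$, each of $F$ bits, with popularity distribution $\mathcal{P}=(p_1,\dots,p_K)$. Each server has cache size $M$ (in units of files). Coded placement: each file is split into $\ell$ equal chunks $W_k^{(1)},\dots,W_k^{(\ell)}$ of $F/\ell$ bits; a coded chunk of $W_k$ is $\sum_{r=1}^{\ell}\alpha_r W_k^{(r)}$ with coefficients $\alpha_r$ i.i.d. uniform over a finite field $\mathbb{F}_q$ (fresh coefficients for each coded chunk). Each server independently fills its cache with $M\ell$ coded chunks, each obtained by sampling a file index $k$ from $\mathcal{P}$ independently and storing a fresh coded chunk of $W_k$. Thus $\tilde p_j$ is the probability that a given server stores at least one coded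 chunk of $W_j$. Requests: $n$ requests arrive; each request is placed at a server chosen uniformly at random and asks for file $W_j$ with probability $p_j$, independently. Coded delivery: a request for $W_j$ at server $u$ is served by the $\ell$ servers nearest to $u$ (in $d_G$, ties broken arbitrarily) that store a coded chunk of $W_j$; each of them sends one coded chunk (of $F/\ell$ bits) to $u$ along a shortest path. Communication cost: the communication cost of a single request is $\frac{1}{\ell}\sum d_G(l,u)$, the sum over the $\ell$ serving servers $l$; the overall communication cost $C$ is the average of this quantity over all $n$ requests, i.e. $C=\frac{1}{nF}\sum_{\text{requests}}\sum_{l} d_G(l,u)\cdot(\text{bits sent by } l)$. "With high probability" means with probability at least $1-1/n^c$ for some constant $c>0$, as $n\to\infty$. Asymptotic notation $O,\Omega,\Theta,o$ is with respect to $n\to\infty$. *)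

theory Defs
  imports "HOL-Probability.Probability" "HOL-Probability.Product_PMF" "HOL-Library.Landau_Symbols" "HOL-Library.Multiset"
begin

text \<open>Servers: the nodes of the s x s grid graph (n = s^2 servers).\<close>
definition grid :: "nat \<Rightarrow> (nat \<times> nat) set" where
  "grid s = {0..<s} \<times> {0..<s}"

text \<open>Shortest-path distance in the grid graph (Manhattan distance).\<close>
definition gdist :: "nat \<times> nat \<Rightarrow> nat \<times> nat \<Rightarrow> nat" where
  "gdist u v = (max (fst u) (fst v) - min (fst u) (fst v)) + (max (snd u) (snd v) - min (snd u) (snd v))"

text \<open>Number of coded chunks stored per cache, M * l (assumed to be a natural number).\<close>
definition nslots :: "real \<Rightarrow> nat \<Rightarrow> nat" where
  "nslots M l = nat \<lfloor>M * real l\<rfloor>"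

text \<open>A placement X assigns to every (server, slot) pair the index of the file of which a
  fresh coded chunk is stored in that slot.  Coding coefficients do not influence the cost.\<close>
definition stores :: "nat \<Rightarrow> ((nat \<times> nat) \<times> nat \<Rightarrow> nat) \<Rightarrow> nat \<times> nat \<Rightarrow> nat \<Rightarrow> bool" where
  "stores m X v j \<longleftrightarrow> (\<exists>i<m. X (v, i) = j)"

definition holders :: "nat \<Rightarrow> nat \<Rightarrow> ((nat \<times> nat) \<times> nat \<Rightarrow> nat) \<Rightarrow> nat \<Rightarrow> (nat \<times> nat) set" where
  "holders s m X j = {v \<in> grid s. stores m X v j}"

text \<open>Communication cost of a request for file j at server u: (1/l) times the sum of the
  distances of the l nearest servers storing a coded chunk of W_j (this sum does not depend on
  how ties are broken).  Convention (only relevant on a low-probability event): if fewer than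
  l servers store W_j, each missing chunk is charged the grid diameter 2(s-1).\<close>
definition req_cost :: "nat \<Rightarrow> nat \<Rightarrow> nat \<Rightarrow> ((nat \<times> nat) \<times> nat \<Rightarrow> nat) \<Rightarrow> nat \<times> nat \<Rightarrow> nat \<Rightarrow> real" where
  "req_cost s m l X u j =
     (let ds = sorted_list_of_multiset (image_mset (gdist u) (mset_set (holders s m X j)))
      in (real (sum_list (take l ds)) + real (l - length ds) * real (2 * (s - 1))) / real l)"

definition placement_pmf :: "nat \<Rightarrow> nat \<Rightarrow> nat pmf \<Rightarrow> ((nat \<times> nat) \<times> nat \<Rightarrow> nat) pmf" where
  "placement_pmf s m P = Pi_pmf (grid s \<times> {0..<m}) 0 (\<lambda>_. P)"

definition requests_pmf :: "nat \<Rightarrow> nat pmf \<Rightarrow> (nat \<Rightarrow> (nat \<times> nat) \<times> nat) pmf" where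
  "requests_pmf s P = Pi_pmf {0..<s^2} ((0, 0), 0) (\<lambda>_. pair_pmf (pmf_of_set (grid s)) P)"

definition overall_cost :: "nat \<Rightarrow> nat \<Rightarrow> nat \<Rightarrow> ((nat \<times> nat) \<times> nat \<Rightarrow> nat) \<Rightarrow> (nat \<Rightarrow> (nat \<times> nat) \<times> nat) \<Rightarrow> real" where
  "overall_cost s m l X R = (\<Sum>r<s^2. req_cost s m l X (fst (R r)) (snd (R r))) / real (s^2)"

definition ptilde :: "nat pmf \<Rightarrow> nat \<Rightarrow> nat \<Rightarrow> real" where
  "ptilde P m j = 1 - (1 - pmf P j) ^ m"

end

theory Submission
  imports Defs
begin

text \<open>Every server stores a coded chunk of W_j independently with probability ptilde, and a
  grid ball of radius r contains between (r / 2)^2 and (2 r + 1)^2 servers.  By Chernoff bounds,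
  except with probability O(exp (- \<gamma> l)), the ball of radius about A sqrt (l / ptilde) around a
  requesting server holds l chunks of W_j, which bounds the cost from above, while the ball of
  radius about \<delta> sqrt (l / ptilde) holds fewer than l / 2, which bounds it from below.  Since
  l = \<Omega>(log n), a union bound over the n K = O(n^2) pairs (server, file) leaves failure
  probability 1 / n; these placements cost at most the diameter 2 sqrt n, which is negligible in
  the expectation.\<close>

lemma sorted_take_le:
  fixes ds :: "nat list"
  assumes "sorted ds" and "l \<le> length (filter (\<lambda>d. d \<le> t) ds)"
  shows "\<forall>x\<in>set (take l ds). x \<le> t"
  using assms
proof (induction ds arbitrary: l)
  case Nil
  then show ?case by simp
next
  case (Cons a ds)
  show ?case
  proof (cases l)
    case 0
    then show ?thesis by simp
  next
    case (Suc l')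
    have "a \<le> t"
    proof (rule ccontr)
      assume "\<not> a \<le> t"
      with Cons.prems(1) have "filter (\<lambda>d. d \<le> t) (a # ds) = []"
        by (auto simp: filter_empty_conv)
      with Cons.prems(2) Suc show False by simp
    qed
    with Cons.prems Suc have "\<forall>x\<in>set (take l' ds). x \<le> t"
      by (intro Cons.IH) auto
    with Suc \<open>a \<le> t\<close> show ?thesis by simp
  qed
qed

lemma sum_list_ge_length_filter_gt:
  fixes xs :: "nat list"
  shows "(t + 1) * length (filter (\<lambda>d. \<not> d \<le> t) xs) \<le> sum_list xs"
  by (induction xs) auto

lemma sum_list_le_length_mult:
  fixes xs :: "nat list"
  assumes "\<forall>x\<in>set xs. x \<le> t"
  shows "sum_list xs \<le> length xs * t"
  using assms by (induction xs) auto

definition dists :: "nat \<times> nat \<Rightarrow> (nat \<times> nat) set \<Rightarrow> nat list" where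
  "dists u S = sorted_list_of_multiset (image_mset (gdist u) (mset_set S))"

lemma sorted_dists: "sorted (dists u S)"
  unfolding dists_def by simp

lemma length_dists: "finite S \<Longrightarrow> length (dists u S) = card S"
  unfolding dists_def
  by (metis size_image_mset size_mset size_mset_set mset_sorted_list_of_multiset)

lemma set_dists: "finite S \<Longrightarrow> set (dists u S) = gdist u ` S"
  unfolding dists_def
  by (metis finite_set_mset_mset_set set_image_mset set_mset_mset mset_sorted_list_of_multiset)

lemma length_filter_dists:
  assumes "finite S"
  shows "length (filter Q (dists u S)) = card {v\<in>S. Q (gdist u v)}"
proof -
  have "length (filter Q (dists u S)) = size (filter_mset Q (image_mset (gdist u) (mset_set S)))"
    unfolding dists_def by (metis size_mset mset_filter mset_sorted_list_of_multiset)
  also have "\<dots> = size (image_mset (gdist u) (filter_mset (\<lambda>v. Q (gdist u v)) (mset_set S)))"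
    by (simp add: filter_mset_image_mset)
  also have "\<dots> = card {v\<in>S. Q (gdist u v)}"
    using assms by simp
  finally show ?thesis .
qed

definition nearest_cost :: "nat \<Rightarrow> nat \<Rightarrow> nat \<times> nat \<Rightarrow> (nat \<times> nat) set \<Rightarrow> real" where
  "nearest_cost s l u S =
     (real (sum_list (take l (dists u S))) + real (l - length (dists u S)) * real (2 * (s - 1))) / real l"

lemma req_cost_eq_nearest_cost: "req_cost s m l X u j = nearest_cost s l u (holders s m X j)"
  unfolding req_cost_def nearest_cost_def dists_def Let_def by simp

lemma nearest_cost_le:
  assumes "finite S" and "l \<ge> 1" and "l \<le> card {v\<in>S. gdist u v \<le> t}"
  shows "nearest_cost s l u S \<le> real t"
proof -
  let ?ds = "dists u S"
  have "card {v\<in>S. gdist u v \<le> t} \<le> card S"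
    using assms(1) by (intro card_mono) auto
  then have len: "l \<le> length ?ds"
    using assms(3) length_dists[OF assms(1), of u] by linarith
  have "l \<le> length (filter (\<lambda>d. d \<le> t) ?ds)"
    using assms(3) length_filter_dists[OF assms(1)] by simp
  then have "\<forall>x\<in>set (take l ?ds). x \<le> t"
    by (intro sorted_take_le sorted_dists)
  then have "sum_list (take l ?ds) \<le> length (take l ?ds) * t"
    by (rule sum_list_le_length_mult)
  also have "\<dots> \<le> l * t"
    by simp
  finally have "real (sum_list (take l ?ds)) \<le> real l * real t"
    by (simp flip: of_nat_mult)
  with len assms(2) show ?thesis
    unfolding nearest_cost_def by (simp add: divide_le_eq mult.commute)
qed

text \<open>The last hypothesis makes the penalty for a missing chunk at least t + 1.\<close>
lemma nearest_cost_ge: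
  assumes "finite S" and "l \<ge> 1" and "2 * card {v\<in>S. gdist u v \<le> t} \<le> l"
    and "t + 1 \<le> 2 * (s - 1)"
  shows "real (t + 1) / 2 \<le> nearest_cost s l u S"
proof -
  let ?ds = "dists u S" and ?near = "\<lambda>d. d \<le> t"
  let ?far = "length (filter (\<lambda>d. \<not> ?near d) (take l ?ds))"
  define h where "h = card {v\<in>S. gdist u v \<le> t}"
  have "length (filter ?near (take l ?ds)) \<le> length (filter ?near ?ds)"
    by (metis append_take_drop_id filter_append le_add1 length_append)
  also have "\<dots> = h"
    unfolding h_def using length_filter_dists[OF assms(1)] by simp
  finally have "l - h \<le> ?far + (l - length ?ds)"
    using sum_length_filter_compl[of ?near "take l ?ds"] by simp
  then have "(t + 1) * (l - h) \<le> (t + 1) * ?far + (t + 1) * (l - length ?ds)"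
    by (metis mult_le_mono2 add_mult_distrib2)
  also have "\<dots> \<le> sum_list (take l ?ds) + 2 * (s - 1) * (l - length ?ds)"
    using sum_list_ge_length_filter_gt assms(4) by (intro add_mono mult_right_mono) auto
  finally have "real (t + 1) * real (l - h)
      \<le> real (sum_list (take l ?ds)) + real (l - length ?ds) * real (2 * (s - 1))"
    by (metis of_nat_le_iff of_nat_add of_nat_mult mult.commute)
  moreover have "real (t + 1) * (real l / 2) \<le> real (t + 1) * real (l - h)"
    using assms(3) h_def by (intro mult_left_mono) linarith+
  ultimately have "real (t + 1) * (real l / 2)
      \<le> real (sum_list (take l ?ds)) + real (l - length ?ds) * real (2 * (s - 1))"
    by linarith
  with assms(2) show ?thesis
    unfolding nearest_cost_def by (simp add: le_divide_eq mult.commute)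
qed

lemma finite_grid [simp]: "finite (grid s)"
  unfolding grid_def by simp

lemma card_grid [simp]: "card (grid s) = s^2"
  unfolding grid_def by (simp add: card_cartesian_product power2_eq_square)

lemma gdist_le_diameter: "u \<in> grid s \<Longrightarrow> v \<in> grid s \<Longrightarrow> gdist u v \<le> 2 * (s - 1)"
  unfolding grid_def gdist_def by (cases u; cases v) auto

lemma nearest_cost_bounds:
  assumes "S \<subseteq> grid s" and "u \<in> grid s" and "l \<ge> 1"
  shows "0 \<le> nearest_cost s l u S" and "nearest_cost s l u S \<le> real (2 * (s - 1))"
proof -
  let ?ds = "dists u S"
  have "finite S"
    using assms(1) finite_grid by (rule finite_subset)
  have "gdist u v \<le> 2 * (s - 1)" if "v \<in> S" for v
    using that assms(1,2) gdist_le_diameter by blast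
  then have "\<forall>x\<in>set ?ds. x \<le> 2 * (s - 1)"
    by (simp add: set_dists[OF \<open>finite S\<close>])
  then have "\<forall>x\<in>set (take l ?ds). x \<le> 2 * (s - 1)"
    by (meson in_set_takeD)
  then have "sum_list (take l ?ds) \<le> length (take l ?ds) * (2 * (s - 1))"
    by (rule sum_list_le_length_mult)
  moreover have "length (take l ?ds) + (l - length ?ds) = l"
    by simp
  ultimately have "sum_list (take l ?ds) + (l - length ?ds) * (2 * (s - 1)) \<le> l * (2 * (s - 1))"
    by (metis add_mult_distrib add_right_mono)
  then have "real (sum_list (take l ?ds)) + real (l - length ?ds) * real (2 * (s - 1))
      \<le> real l * real (2 * (s - 1))"
    by (metis of_nat_le_iff of_nat_add of_nat_mult)
  with assms(3) show "nearest_cost s l u S \<le> real (2 * (s - 1))"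
    unfolding nearest_cost_def by (simp add: divide_le_eq mult.commute)
  show "0 \<le> nearest_cost s l u S"
    unfolding nearest_cost_def by simp
qed
definition grid_ball :: "nat \<Rightarrow> nat \<times> nat \<Rightarrow> nat \<Rightarrow> (nat \<times> nat) set" where
  "grid_ball s u t = {v\<in>grid s. gdist u v \<le> t}"

lemma grid_ball_subset: "grid_ball s u t \<subseteq> grid s"
  unfolding grid_ball_def by auto

lemma card_grid_ball_le: "card (grid_ball s u t) \<le> (2 * t + 1)^2"
proof -
  obtain a b where u: "u = (a, b)"
    by (cases u)
  have "grid_ball s u t \<subseteq> {a - t..a + t} \<times> {b - t..b + t}"
    unfolding grid_ball_def gdist_def u by auto
  then have "card (grid_ball s u t) \<le> card ({a - t..a + t} \<times> {b - t..b + t})"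
    by (intro card_mono) auto
  also have "\<dots> \<le> (2 * t + 1) * (2 * t + 1)"
    unfolding card_cartesian_product by (intro mult_mono) auto
  finally show ?thesis
    by (simp add: power2_eq_square)
qed

text \<open>Exhibits (k + 1)^2 points of a ball also near the boundary of the grid.\<close>
definition window :: "nat \<Rightarrow> nat \<Rightarrow> nat \<Rightarrow> nat set" where
  "window s k a = (if a + k \<le> s - 1 then {a..a + k} else {s - 1 - k..s - 1})"

lemma window_props:
  assumes "a < s" and "k \<le> s - 1"
  shows "window s k a \<subseteq> {0..<s}" and "card (window s k a) = k + 1"
    and "x \<in> window s k a \<Longrightarrow> max a x - min a x \<le> k"
  using assms unfolding window_def by (auto split: if_splits simp: max_def min_def)

lemma card_grid_ball_ge:
  assumes u: "u \<in> grid s" and k: "k \<le> s - 1"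
  shows "(k + 1)^2 \<le> card (grid_ball s u (2 * k))"
proof -
  obtain a b where ab: "u = (a, b)" "a < s" "b < s"
    using u unfolding grid_def by auto
  have "window s k a \<times> window s k b \<subseteq> grid_ball s u (2 * k)"
  proof
    fix v assume "v \<in> window s k a \<times> window s k b"
    then obtain x y where xy: "v = (x, y)" "x \<in> window s k a" "y \<in> window s k b"
      by auto
    then have "x < s" "y < s" "max a x - min a x \<le> k" "max b y - min b y \<le> k"
      using window_props[OF ab(2) k] window_props[OF ab(3) k] by auto
    then show "v \<in> grid_ball s u (2 * k)"
      unfolding grid_ball_def grid_def gdist_def xy(1) ab(1) by (auto simp: max_def min_def)
  qed
  then have "card (window s k a \<times> window s k b) \<le> card (grid_ball s u (2 * k))"
    by (intro card_mono) (auto simp: grid_ball_def)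
  then show ?thesis
    using window_props(2)[OF ab(2) k] window_props(2)[OF ab(3) k]
    by (simp add: card_cartesian_product power2_eq_square)
qed

lemma Pi_pmf_Times:
  assumes fA: "finite A" and fB: "finite B"
  shows "Pi_pmf (A \<times> B) d (\<lambda>_. P) = map_pmf case_prod (Pi_pmf A (\<lambda>_. d) (\<lambda>_. Pi_pmf B d (\<lambda>_. P)))"
proof (rule pmf_eqI)
  fix g :: "'a \<times> 'b \<Rightarrow> 'c"
  have inj: "inj (case_prod :: ('a \<Rightarrow> 'b \<Rightarrow> 'c) \<Rightarrow> _)"
    by (intro injI) (metis curry_case_prod)
  have "pmf (map_pmf case_prod (Pi_pmf A (\<lambda>_. d) (\<lambda>_. Pi_pmf B d (\<lambda>_. P)))) g
        = pmf (Pi_pmf A (\<lambda>_. d) (\<lambda>_. Pi_pmf B d (\<lambda>_. P))) (curry g)"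
    by (subst (1) case_prod_curry[symmetric], subst pmf_map_inj'[OF inj]) simp
  also have "\<dots> = pmf (Pi_pmf (A \<times> B) d (\<lambda>_. P)) g"
  proof (cases "\<forall>x. x \<notin> A \<times> B \<longrightarrow> g x = d")
    case True
    have "pmf (Pi_pmf A (\<lambda>_. d) (\<lambda>_. Pi_pmf B d (\<lambda>_. P))) (curry g)
          = (\<Prod>a\<in>A. pmf (Pi_pmf B d (\<lambda>_. P)) (curry g a))"
      using True fA by (subst pmf_Pi) (auto simp: fun_eq_iff)
    also have "\<dots> = (\<Prod>a\<in>A. \<Prod>b\<in>B. pmf P (g (a, b)))"
      using True fB by (intro prod.cong refl, subst pmf_Pi) auto
    also have "\<dots> = pmf (Pi_pmf (A \<times> B) d (\<lambda>_. P)) g"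
      using True fA fB by (subst pmf_Pi) (auto simp: prod.cartesian_product)
    finally show ?thesis .
  next
    case False
    then obtain a b where ab: "(a, b) \<notin> A \<times> B" "g (a, b) \<noteq> d"
      by auto
    have "pmf (Pi_pmf A (\<lambda>_. d) (\<lambda>_. Pi_pmf B d (\<lambda>_. P))) (curry g) = 0"
    proof (cases "a \<in> A")
      case False
      then show ?thesis
        using fA ab by (subst pmf_Pi_outside) (auto simp: fun_eq_iff intro!: exI[of _ a])
    next
      case True
      have "pmf (Pi_pmf B d (\<lambda>_. P)) (curry g a) = 0"
        using fB True ab by (intro pmf_Pi_outside) auto
      with True fA show ?thesis
        by (subst pmf_Pi) (auto intro: prod_zero)
    qed
    moreover have "pmf (Pi_pmf (A \<times> B) d (\<lambda>_. P)) g = 0"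
      using fA fB ab by (intro pmf_Pi_outside) auto
    ultimately show ?thesis
      by simp
  qed
  finally show "pmf (Pi_pmf (A \<times> B) d (\<lambda>_. P)) g
      = pmf (map_pmf case_prod (Pi_pmf A (\<lambda>_. d) (\<lambda>_. Pi_pmf B d (\<lambda>_. P)))) g"
    by simp
qed

lemma finite_set_Pi_pmf:
  assumes "finite A" and "\<And>x. x \<in> A \<Longrightarrow> finite (set_pmf (p x))"
  shows "finite (set_pmf (Pi_pmf A d p))"
proof (rule finite_subset)
  show "set_pmf (Pi_pmf A d p) \<subseteq> PiE_dflt A d (set_pmf \<circ> p)"
    by (rule set_Pi_pmf_subset'[OF assms(1)])
  show "finite (PiE_dflt A d (set_pmf \<circ> p))"
    using assms by (intro finite_PiE_dflt) auto
qed

lemma ptilde_nonneg: "0 \<le> ptilde P m j"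
  and ptilde_le_1: "ptilde P m j \<le> 1"
  using pmf_le_1[of P j] pmf_nonneg[of P j]
  unfolding ptilde_def by (auto intro: power_le_one)

lemma map_pmf_slots_bernoulli:
  assumes "j \<noteq> 0"
  shows "map_pmf (\<lambda>G. \<exists>i<m. G i = j) (Pi_pmf {0..<m} 0 (\<lambda>_. P)) = bernoulli_pmf (ptilde P m j)"
proof -
  let ?Q = "Pi_pmf {0..<m} (0::nat) (\<lambda>_. P)" and ?f = "\<lambda>G. \<exists>i<m. G i = j"
  have "measure_pmf.prob P (- {j}) = 1 - pmf P j"
    using measure_pmf.prob_compl[of "{j}" P] by (simp add: measure_pmf_single Compl_eq_Diff_UNIV)
  then have "measure_pmf.prob ?Q (Pi {0..<m} (\<lambda>_. - {j})) = (1 - pmf P j) ^ m"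
    by (subst measure_Pi_pmf_Pi) simp_all
  moreover have "?f -` {False} = Pi {0..<m} (\<lambda>_. - {j})"
    by (auto simp: Pi_def)
  ultimately have F: "pmf (map_pmf ?f ?Q) False = 1 - ptilde P m j"
    unfolding ptilde_def pmf_map by simp
  show ?thesis
  proof (rule pmf_eqI)
    fix b :: bool
    show "pmf (map_pmf ?f ?Q) b = pmf (bernoulli_pmf (ptilde P m j)) b"
      using F pmf_True_conv_False[of "map_pmf ?f ?Q"] ptilde_nonneg ptilde_le_1
      by (cases b) auto
  qed
qed

lemma map_pmf_stores_placement:
  assumes "j \<noteq> 0"
  shows "map_pmf (\<lambda>X v. stores m X v j) (placement_pmf s m P)
         = Pi_pmf (grid s) False (\<lambda>_. bernoulli_pmf (ptilde P m j))"
proof -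
  let ?Q = "Pi_pmf {0..<m} (0::nat) (\<lambda>_. P)" and ?f = "\<lambda>G. \<exists>i<m. G i = j"
  have "(\<lambda>X v. stores m X v j) \<circ> case_prod = (\<lambda>h. ?f \<circ> h)"
    by (auto simp: fun_eq_iff stores_def)
  then have "map_pmf (\<lambda>X v. stores m X v j) (placement_pmf s m P)
        = map_pmf (\<lambda>h. ?f \<circ> h) (Pi_pmf (grid s) (\<lambda>_. 0) (\<lambda>_. ?Q))"
    unfolding placement_pmf_def by (simp add: Pi_pmf_Times pmf.map_comp)
  also have "\<dots> = Pi_pmf (grid s) False (\<lambda>_. map_pmf ?f ?Q)"
    using assms by (intro Pi_pmf_map[symmetric]) auto
  finally show ?thesis
    using assms by (simp add: map_pmf_slots_bernoulli)
qed

lemma prob_placement_stores: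
  assumes "j \<noteq> 0"
  shows "measure_pmf.prob (placement_pmf s m P) {X. \<Phi> (\<lambda>v. stores m X v j)}
       = measure_pmf.prob (Pi_pmf (grid s) False (\<lambda>_. bernoulli_pmf (ptilde P m j))) {b. \<Phi> b}"
  by (simp flip: map_pmf_stores_placement[OF assms])

lemma expectation_exp_card_Pi_bernoulli:
  assumes fA: "finite A" and "B \<subseteq> A" and q: "0 \<le> q" "q \<le> 1"
  shows "measure_pmf.expectation (Pi_pmf A False (\<lambda>_. bernoulli_pmf q))
           (\<lambda>b. exp (t * real (card {v\<in>B. b v}))) = (1 - q + q * exp t) ^ card B"
proof -
  define f where "f = (\<lambda>v (x::bool). if v \<in> B \<and> x then exp t else 1)"
  have fB: "finite B"
    using assms(1,2) by (rule finite_subset[rotated])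
  have AB: "{v\<in>A. v \<in> B} = B" "{v\<in>A. v \<in> B \<and> b v} = {v\<in>B. b v}" for b
    using assms(2) by auto
  have "exp (t * real (card {v\<in>B. b v})) = (\<Prod>v\<in>A. f v (b v))" for b
  proof -
    have "(\<Prod>v\<in>A. f v (b v)) = (\<Prod>v\<in>{v\<in>B. b v}. exp t)"
      unfolding f_def using fA by (simp add: prod.inter_filter[symmetric] AB)
    then show ?thesis
      by (simp add: exp_of_nat_mult[symmetric] mult.commute)
  qed
  then have "measure_pmf.expectation (Pi_pmf A False (\<lambda>_. bernoulli_pmf q))
           (\<lambda>b. exp (t * real (card {v\<in>B. b v})))
      = measure_pmf.expectation (Pi_pmf A False (\<lambda>_. bernoulli_pmf q)) (\<lambda>b. \<Prod>v\<in>A. f v (b v))"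
    by presburger
  also have "\<dots> = (\<Prod>v\<in>A. measure_pmf.expectation (bernoulli_pmf q) (f v))"
    by (intro expectation_prod_Pi_pmf fA integrable_measure_pmf_finite) (auto simp: f_def)
  also have "\<dots> = (\<Prod>v\<in>A. if v \<in> B then 1 - q + q * exp t else 1)"
    using q by (intro prod.cong refl)
      (auto simp: f_def integral_measure_pmf_real[where A=UNIV] UNIV_bool)
  also have "\<dots> = (1 - q + q * exp t) ^ card B"
    using fA AB by (simp add: prod.inter_filter[symmetric])
  finally show ?thesis .
qed

lemma expectation_exp_card_Pi_bernoulli_le:
  assumes "finite A" and "B \<subseteq> A" and "0 \<le> q" "q \<le> 1"
  shows "measure_pmf.expectation (Pi_pmf A False (\<lambda>_. bernoulli_pmf q))
           (\<lambda>b. exp (t * real (card {v\<in>B. b v}))) \<le> exp (real (card B) * q * (exp t - 1))"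
proof -
  have "0 \<le> 1 - q + q * exp t"
    using assms(3,4) by (simp add: add_nonneg_nonneg)
  moreover have "1 - q + q * exp t \<le> exp (q * (exp t - 1))"
    using exp_ge_add_one_self[of "q * (exp t - 1)"] by (simp add: algebra_simps)
  ultimately have "(1 - q + q * exp t) ^ card B \<le> exp (q * (exp t - 1)) ^ card B"
    by (intro power_mono)
  then show ?thesis
    using assms by (simp add: expectation_exp_card_Pi_bernoulli exp_of_nat_mult[symmetric] mult.assoc)
qed

lemma prob_card_ge_Pi_bernoulli:
  assumes "finite A" and "B \<subseteq> A" and "0 \<le> q" "q \<le> 1" and "t > 0"
  shows "measure_pmf.prob (Pi_pmf A False (\<lambda>_. bernoulli_pmf q)) {b. a \<le> real (card {v\<in>B. b v})}
         \<le> exp (- t * a + real (card B) * q * (exp t - 1))"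
proof -
  let ?M = "Pi_pmf A False (\<lambda>_. bernoulli_pmf q)" and ?Y = "\<lambda>b. real (card {v\<in>B. b v})"
  have int: "integrable ?M f" for f :: "_ \<Rightarrow> real"
    using assms(1) by (intro integrable_measure_pmf_finite finite_set_Pi_pmf) auto
  have I: "(\<integral>b\<in>space ?M. exp (t * ?Y b) \<partial>?M) \<le> exp (real (card B) * q * (exp (t) - 1))"
    using set_integral_space[OF int] expectation_exp_card_Pi_bernoulli_le[OF assms(1-4)] by simp
  have "measure_pmf.prob ?M {b \<in> space ?M. a \<le> ?Y b}
      \<le> exp (- t * a) * (\<integral>b\<in>space ?M. exp (t * ?Y b) \<partial>?M)"
    using assms(5) int by (intro measure_pmf.Chernoff_ineq_ge) (auto simp: set_integrable_def)
  also have "\<dots> \<le> exp (- t * a) * exp (real (card B) * q * (exp (t) - 1))"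
    using I by (intro mult_left_mono) auto
  finally show ?thesis
    by (simp add: exp_add[symmetric] algebra_simps)
qed

lemma prob_card_le_Pi_bernoulli:
  assumes "finite A" and "B \<subseteq> A" and "0 \<le> q" "q \<le> 1" and "t > 0"
  shows "measure_pmf.prob (Pi_pmf A False (\<lambda>_. bernoulli_pmf q)) {b. real (card {v\<in>B. b v}) \<le> a}
         \<le> exp (t * a - real (card B) * q * (1 - exp (- t)))"
proof -
  let ?M = "Pi_pmf A False (\<lambda>_. bernoulli_pmf q)" and ?Y = "\<lambda>b. real (card {v\<in>B. b v})"
  have int: "integrable ?M f" for f :: "_ \<Rightarrow> real"
    using assms(1) by (intro integrable_measure_pmf_finite finite_set_Pi_pmf) auto
  have I: "(\<integral>b\<in>space ?M. exp (- t * ?Y b) \<partial>?M) \<le> exp (real (card B) * q * (exp (- t) - 1))"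
    using set_integral_space[OF int] expectation_exp_card_Pi_bernoulli_le[OF assms(1-4), of "- t"]
    by simp
  have "measure_pmf.prob ?M {b \<in> space ?M. ?Y b \<le> a}
      \<le> exp (t * a) * (\<integral>b\<in>space ?M. exp (- t * ?Y b) \<partial>?M)"
    using assms(5) int by (intro measure_pmf.Chernoff_ineq_le) (auto simp: set_integrable_def)
  also have "\<dots> \<le> exp (t * a) * exp (real (card B) * q * (exp (- t) - 1))"
    using I by (intro mult_left_mono) auto
  finally show ?thesis
    by (simp add: exp_add[symmetric] algebra_simps)
qed

definition cost_scale :: "nat pmf \<Rightarrow> nat \<Rightarrow> nat \<Rightarrow> nat \<Rightarrow> real" where
  "cost_scale P m L j = sqrt (real L / ptilde P m j)"

lemma cost_scale_nonneg: "0 \<le> cost_scale P m L j"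
  unfolding cost_scale_def using ptilde_nonneg by simp

lemma cost_scale_ge_1:
  assumes "L \<ge> 1" and "ptilde P m j > 0"
  shows "1 \<le> cost_scale P m L j"
  using assms ptilde_le_1[of P m j] unfolding cost_scale_def by (simp add: le_divide_eq)

lemma cost_scale_sq_mult_ptilde:
  assumes "ptilde P m j > 0"
  shows "(cost_scale P m L j)^2 * ptilde P m j = real L"
  using assms unfolding cost_scale_def by simp

lemma holders_near_eq: "{v\<in>holders s m X j. gdist u v \<le> t} = {v\<in>grid_ball s u t. stores m X v j}"
  unfolding holders_def grid_ball_def by auto

lemma holders_subset_grid: "holders s m X j \<subseteq> grid s"
  unfolding holders_def by auto

lemma req_cost_le_if_holders_near:
  assumes "L \<ge> 1" and "L \<le> card {v\<in>grid_ball s u t. stores m X v j}"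
  shows "req_cost s m L X u j \<le> real t"
  unfolding req_cost_eq_nearest_cost
  using assms holders_subset_grid finite_subset[OF holders_subset_grid finite_grid]
  by (intro nearest_cost_le) (auto simp: holders_near_eq)

lemma req_cost_ge_if_few_holders_near:
  assumes "L \<ge> 1" and "2 * card {v\<in>grid_ball s u t. stores m X v j} \<le> L"
    and "t + 1 \<le> 2 * (s - 1)"
  shows "real (t + 1) / 2 \<le> req_cost s m L X u j"
  unfolding req_cost_eq_nearest_cost
  using assms finite_subset[OF holders_subset_grid finite_grid]
  by (intro nearest_cost_ge) (auto simp: holders_near_eq)

lemma req_cost_bounds:
  assumes "u \<in> grid s" and "L \<ge> 1"
  shows "0 \<le> req_cost s m L X u j" and "req_cost s m L X u j \<le> real (2 * (s - 1))"
  unfolding req_cost_eq_nearest_cost by (rule nearest_cost_bounds[OF holders_subset_grid assms])+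

text \<open>The ball of radius 2k has at least (A c)^2 servers, each storing file j with probability
  ptilde = L / c^2; so fewer than L holders is a lower-tail event of a binomial variable with
  mean at least A^2 L.\<close>
lemma prob_few_holders_near:
  assumes j: "j \<noteq> 0" and u: "u \<in> grid s" and q: "ptilde P m j > 0" and A: "A \<ge> 0"
    and k: "k = nat \<lceil>A * cost_scale P m L j\<rceil>" and ks: "k \<le> s - 1"
  shows "measure_pmf.prob (placement_pmf s m P) {X. card {v\<in>grid_ball s u (2 * k). stores m X v j} < L}
         \<le> exp (real L - A^2 / 2 * real L)"
proof -
  let ?q = "ptilde P m j" and ?c = "cost_scale P m L j" and ?B = "grid_ball s u (2 * k)"
  let ?M = "Pi_pmf (grid s) False (\<lambda>_. bernoulli_pmf ?q)"
  have "A * ?c \<le> real k"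
    using k by linarith
  then have "(A * ?c)^2 \<le> (real k + 1)^2"
    using A cost_scale_nonneg[of P m L j] by (intro power_mono) auto
  also have "\<dots> = real ((k + 1)^2)"
    by simp
  also have "\<dots> \<le> real (card ?B)"
    using card_grid_ball_ge[OF u ks] by (rule of_nat_mono)
  finally have "(A * ?c)^2 * ?q \<le> real (card ?B) * ?q"
    using ptilde_nonneg by (rule mult_right_mono)
  moreover have "(A * ?c)^2 * ?q = A^2 * real L"
    using cost_scale_sq_mult_ptilde[OF q, of L] by (simp add: power_mult_distrib)
  moreover have "exp (- 1) \<le> (1 / 2 :: real)"
    using exp_ge_add_one_self[of 1] by (simp add: exp_minus field_simps)
  then have "real (card ?B) * ?q * (1 / 2) \<le> real (card ?B) * ?q * (1 - exp (- 1))"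
    using ptilde_nonneg by (intro mult_left_mono) auto
  ultimately have mean: "A^2 / 2 * real L \<le> real (card ?B) * ?q * (1 - exp (- 1))"
    by linarith
  have "measure_pmf.prob (placement_pmf s m P) {X. card {v\<in>?B. stores m X v j} < L}
      = measure_pmf.prob ?M {b. card {v\<in>?B. b v} < L}"
    by (rule prob_placement_stores[OF j])
  also have "\<dots> \<le> measure_pmf.prob ?M {b. real (card {v\<in>?B. b v}) \<le> real L}"
    by (intro measure_pmf.finite_measure_mono) auto
  also have "\<dots> \<le> exp (1 * real L - real (card ?B) * ?q * (1 - exp (- 1)))"
    using ptilde_nonneg ptilde_le_1 grid_ball_subset by (intro prob_card_le_Pi_bernoulli) auto
  also have "\<dots> \<le> exp (real L - A^2 / 2 * real L)"
    using mean by simp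
  finally show ?thesis .
qed

text \<open>Conversely the ball of radius t \<le> \<delta> c has at most 8 \<delta>^2 c^2 + 2 servers, so at least
  L / 2 holders in it is an upper-tail event of a binomial variable with mean at most
  8 \<delta>^2 L + 2.\<close>
lemma prob_many_holders_near:
  assumes j: "j \<noteq> 0" and q: "ptilde P m j > 0" and \<delta>: "\<delta> \<ge> 0" and T: "T > 0"
    and t: "t = nat \<lfloor>\<delta> * cost_scale P m L j\<rfloor>"
  shows "measure_pmf.prob (placement_pmf s m P) {X. real L / 2 \<le> real (card {v\<in>grid_ball s u t. stores m X v j})}
         \<le> exp (- T * (real L / 2) + (8 * \<delta>^2 * real L + 2) * exp T)"
proof -
  let ?q = "ptilde P m j" and ?c = "cost_scale P m L j" and ?B = "grid_ball s u t"
  let ?M = "Pi_pmf (grid s) False (\<lambda>_. bernoulli_pmf ?q)"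
  have "real (card ?B) \<le> real ((2 * t + 1)^2)"
    using card_grid_ball_le[of s u t] by (rule of_nat_mono)
  also have "\<dots> = (2 * real t + 1)^2"
    by simp
  also have "\<dots> \<le> 8 * real t ^ 2 + 2"
    using zero_le_power2[of "2 * real t - 1"] by (simp add: power2_eq_square algebra_simps)
  also have "\<dots> \<le> 8 * (\<delta> * ?c)^2 + 2"
    using t \<delta> cost_scale_nonneg[of P m L j] by (intro add_mono mult_left_mono power_mono) auto
  finally have "real (card ?B) * ?q \<le> (8 * (\<delta> * ?c)^2 + 2) * ?q"
    using ptilde_nonneg by (intro mult_right_mono) auto
  also have "\<dots> = 8 * \<delta>^2 * real L + 2 * ?q"
    using cost_scale_sq_mult_ptilde[OF q, of L] by (simp add: power_mult_distrib algebra_simps)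
  also have "\<dots> \<le> 8 * \<delta>^2 * real L + 2"
    using ptilde_le_1 by simp
  finally have "real (card ?B) * ?q * (exp T - 1) \<le> (8 * \<delta>^2 * real L + 2) * (exp T - 1)"
    using T by (intro mult_right_mono) auto
  also have "\<dots> \<le> (8 * \<delta>^2 * real L + 2) * exp T"
    by (intro mult_left_mono) auto
  finally have mean: "real (card ?B) * ?q * (exp T - 1) \<le> (8 * \<delta>^2 * real L + 2) * exp T" .
  have "measure_pmf.prob (placement_pmf s m P) {X. real L / 2 \<le> real (card {v\<in>?B. stores m X v j})}
      = measure_pmf.prob ?M {b. real L / 2 \<le> real (card {v\<in>?B. b v})}"
    by (rule prob_placement_stores[OF j])
  also have "\<dots> \<le> exp (- T * (real L / 2) + real (card ?B) * ?q * (exp T - 1))"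
    using ptilde_nonneg ptilde_le_1 grid_ball_subset T by (intro prob_card_ge_Pi_bernoulli) auto
  also have "\<dots> \<le> exp (- T * (real L / 2) + (8 * \<delta>^2 * real L + 2) * exp T)"
    using mean by simp
  finally show ?thesis .
qed

text \<open>Radius-2k balls with k = \<lceil>A c\<rceil> contain L holders, and radius-t balls with t = \<lfloor>\<delta> c\<rfloor>
  fewer than L / 2; together these pin the cost of a request between \<delta> c / 2 and 4 A c.\<close>
lemma prob_req_cost_out_of_scale:
  assumes s: "s \<ge> 4" and L: "L \<ge> 1" and j: "j \<noteq> 0" and q: "ptilde P m j > 0" and u: "u \<in> grid s"
    and A: "A \<ge> 1" and \<delta>: "0 < \<delta>" "\<delta> \<le> 1" and T: "T > 0"
    and Ac: "A * cost_scale P m L j \<le> real s / 2"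
  shows "measure_pmf.prob (placement_pmf s m P)
           {X. \<not> (\<delta> / 2 * cost_scale P m L j \<le> req_cost s m L X u j
                  \<and> req_cost s m L X u j \<le> 4 * A * cost_scale P m L j)}
         \<le> exp (real L - A^2 / 2 * real L) + exp (- T * (real L / 2) + (8 * \<delta>^2 * real L + 2) * exp T)"
proof -
  let ?c = "cost_scale P m L j" and ?M = "placement_pmf s m P"
  let ?near = "\<lambda>X r. card {v\<in>grid_ball s u r. stores m X v j}"
  define k where "k = nat \<lceil>A * ?c\<rceil>"
  define t where "t = nat \<lfloor>\<delta> * ?c\<rfloor>"
  have c: "1 \<le> ?c"
    using cost_scale_ge_1[OF L q] .
  then have Ac1: "1 \<le> A * ?c"
    using A by (metis mult_mono' mult_1 zero_le_one)
  have k: "real k \<le> A * ?c + 1"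
    unfolding k_def using Ac1 by linarith
  then have k4: "real (2 * k) \<le> 4 * A * ?c" and ks: "k \<le> s - 1"
    using Ac1 Ac s by (simp_all add: of_nat_diff)
  have "\<delta> * ?c \<le> A * ?c"
    using \<delta>(2) A c by (intro mult_right_mono) auto
  then have t: "\<delta> * ?c \<le> real (t + 1)" "t + 1 \<le> 2 * (s - 1)"
    unfolding t_def using \<delta>(1) c Ac s by linarith+
  have "\<delta> / 2 * ?c \<le> req_cost s m L X u j \<and> req_cost s m L X u j \<le> 4 * A * ?c"
    if "\<not> ?near X (2 * k) < L" and "\<not> real L / 2 \<le> real (?near X t)" for X
  proof -
    have "L \<le> ?near X (2 * k)" and "2 * ?near X t \<le> L"
      using that by linarith+
    then have "req_cost s m L X u j \<le> real (2 * k)" and "real (t + 1) / 2 \<le> req_cost s m L X u j"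
      using L t(2) req_cost_le_if_holders_near req_cost_ge_if_few_holders_near by blast+
    with k4 t(1) show ?thesis
      by auto
  qed
  then have "{X. \<not> (\<delta> / 2 * ?c \<le> req_cost s m L X u j \<and> req_cost s m L X u j \<le> 4 * A * ?c)}
      \<subseteq> {X. ?near X (2 * k) < L} \<union> {X. real L / 2 \<le> real (?near X t)}"
    by blast
  then have "measure_pmf.prob ?M {X. \<not> (\<delta> / 2 * ?c \<le> req_cost s m L X u j \<and> req_cost s m L X u j \<le> 4 * A * ?c)}
      \<le> measure_pmf.prob ?M ({X. ?near X (2 * k) < L} \<union> {X. real L / 2 \<le> real (?near X t)})"
    by (rule measure_pmf.finite_measure_mono) simp
  also have "\<dots> \<le> measure_pmf.prob ?M {X. ?near X (2 * k) < L} + measure_pmf.prob ?M {X. real L / 2 \<le> real (?near X t)}"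
    by (rule measure_Un_le) auto
  also have "\<dots> \<le> exp (real L - A^2 / 2 * real L) + exp (- T * (real L / 2) + (8 * \<delta>^2 * real L + 2) * exp T)"
    using A \<delta> T
    by (intro add_mono prob_few_holders_near[OF j u q _ k_def ks] prob_many_holders_near[OF j q _ T t_def]) auto
  finally show ?thesis .
qed

lemma prob_Ball_ge:
  fixes M :: "'a pmf"
  assumes "finite I" and "\<And>i. i \<in> I \<Longrightarrow> measure_pmf.prob M {x. \<not> Q i x} \<le> e"
  shows "1 - real (card I) * e \<le> measure_pmf.prob M {x. \<forall>i\<in>I. Q i x}"
proof -
  have "measure_pmf.prob M (- {x. \<forall>i\<in>I. Q i x}) = measure_pmf.prob M (\<Union>i\<in>I. {x. \<not> Q i x})"
    by (intro arg_cong[where f = "measure_pmf.prob M"]) auto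
  also have "\<dots> \<le> (\<Sum>i\<in>I. measure_pmf.prob M {x. \<not> Q i x})"
    using assms(1) by (intro measure_pmf.finite_measure_subadditive_finite) auto
  also have "\<dots> \<le> real (card I) * e"
    using assms(2) sum_bounded_above[of I _ e] by auto
  finally show ?thesis
    using measure_pmf.prob_compl[of "{x. \<forall>i\<in>I. Q i x}" M] by (simp add: Compl_eq_Diff_UNIV)
qed

definition typical_placements ::
    "nat \<Rightarrow> nat \<Rightarrow> nat \<Rightarrow> nat \<Rightarrow> nat pmf \<Rightarrow> real \<Rightarrow> real \<Rightarrow> ((nat \<times> nat) \<times> nat \<Rightarrow> nat) set" where
  "typical_placements s m L K P a1 a2 =
     {X. \<forall>u\<in>grid s. \<forall>j\<in>{1..K}. a1 * cost_scale P m L j \<le> req_cost s m L X u j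
                               \<and> req_cost s m L X u j \<le> a2 * cost_scale P m L j}"

lemma prob_typical_placements_ge:
  assumes "s \<ge> 4" and "L \<ge> 1" and q: "\<forall>j\<in>{1..K}. ptilde P m j > 0"
    and "A \<ge> 1" and "0 < \<delta>" "\<delta> \<le> 1" and "T > 0"
    and Ac: "\<forall>j\<in>{1..K}. A * cost_scale P m L j \<le> real s / 2"
  shows "1 - real (s^2) * real K * (exp (real L - A^2 / 2 * real L)
                                     + exp (- T * (real L / 2) + (8 * \<delta>^2 * real L + 2) * exp T))
         \<le> measure_pmf.prob (placement_pmf s m P) (typical_placements s m L K P (\<delta> / 2) (4 * A))"
proof -
  let ?E = "exp (real L - A^2 / 2 * real L) + exp (- T * (real L / 2) + (8 * \<delta>^2 * real L + 2) * exp T)"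
  let ?Q = "\<lambda>(u, j) X. \<delta> / 2 * cost_scale P m L j \<le> req_cost s m L X u j
                        \<and> req_cost s m L X u j \<le> 4 * A * cost_scale P m L j"
  have "1 - real (card (grid s \<times> {1..K})) * ?E
      \<le> measure_pmf.prob (placement_pmf s m P) {X. \<forall>i\<in>grid s \<times> {1..K}. ?Q i X}"
  proof (rule prob_Ball_ge)
    fix i assume "i \<in> grid s \<times> {1..K}"
    then obtain u j where i: "i = (u, j)" and u: "u \<in> grid s" and j: "j \<in> {1..K}"
      by auto
    have "measure_pmf.prob (placement_pmf s m P)
           {X. \<not> (\<delta> / 2 * cost_scale P m L j \<le> req_cost s m L X u j
                  \<and> req_cost s m L X u j \<le> 4 * A * cost_scale P m L j)} \<le> ?E"
      by (rule prob_req_cost_out_of_scale) (use assms u j in auto)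
    then show "measure_pmf.prob (placement_pmf s m P) {X. \<not> ?Q i X} \<le> ?E"
      by (simp add: i)
  qed simp
  moreover have "{X. \<forall>i\<in>grid s \<times> {1..K}. ?Q i X} = typical_placements s m L K P (\<delta> / 2) (4 * A)"
    unfolding typical_placements_def by auto
  ultimately show ?thesis
    by (simp add: card_cartesian_product)
qed

lemma grid_nonempty: "s \<ge> 1 \<Longrightarrow> grid s \<noteq> {}"
  unfolding grid_def by auto

lemma finite_set_placement_pmf: "finite (set_pmf P) \<Longrightarrow> finite (set_pmf (placement_pmf s m P))"
  unfolding placement_pmf_def by (intro finite_set_Pi_pmf) auto

lemma finite_set_requests_pmf: "finite (set_pmf P) \<Longrightarrow> s \<ge> 1 \<Longrightarrow> finite (set_pmf (requests_pmf s P))"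
  unfolding requests_pmf_def by (intro finite_set_Pi_pmf) (auto simp: grid_nonempty)

lemma set_requests_pmf:
  assumes "R \<in> set_pmf (requests_pmf s P)" and "r < s^2" and "s \<ge> 1"
  shows "fst (R r) \<in> grid s" and "snd (R r) \<in> set_pmf P"
proof -
  have "R \<in> PiE_dflt {0..<s^2} ((0, 0), 0) (set_pmf \<circ> (\<lambda>_. pair_pmf (pmf_of_set (grid s)) P))"
    using set_Pi_pmf_subset'[of "{0..<s^2}" "((0, 0), 0)" "\<lambda>_. pair_pmf (pmf_of_set (grid s)) P"] assms(1)
    unfolding requests_pmf_def by auto
  then have "R r \<in> grid s \<times> set_pmf P"
    using assms(2,3) grid_nonempty[of s] by (auto simp: PiE_dflt_def)
  then show "fst (R r) \<in> grid s" and "snd (R r) \<in> set_pmf P"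
    by auto
qed

lemma expectation_requests_mean:
  fixes g :: "nat \<Rightarrow> real"
  assumes s: "s \<ge> 1" and fP: "finite (set_pmf P)"
  shows "measure_pmf.expectation (requests_pmf s P) (\<lambda>R. (\<Sum>r<s^2. g (snd (R r))) / real (s^2))
       = measure_pmf.expectation P g"
proof -
  have int: "integrable (measure_pmf (requests_pmf s P)) f" for f :: "_ \<Rightarrow> real"
    by (intro integrable_measure_pmf_finite finite_set_requests_pmf fP s)
  have "measure_pmf.expectation (requests_pmf s P) (\<lambda>R. g (snd (R r))) = measure_pmf.expectation P g"
    if "r < s^2" for r
  proof -
    have "map_pmf (\<lambda>R. R r) (requests_pmf s P) = pair_pmf (pmf_of_set (grid s)) P"
      unfolding requests_pmf_def using that by (subst Pi_pmf_component) auto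
    then have "measure_pmf.expectation (pair_pmf (pmf_of_set (grid s)) P) (\<lambda>x. g (snd x))
        = measure_pmf.expectation (requests_pmf s P) (\<lambda>R. g (snd (R r)))"
      using integral_map_pmf[of "\<lambda>R. R r" "requests_pmf s P" "\<lambda>x. g (snd x)"] by simp
    then show ?thesis
      by simp
  qed
  then have "measure_pmf.expectation (requests_pmf s P) (\<lambda>R. (\<Sum>r<s^2. g (snd (R r))) / real (s^2))
      = (\<Sum>r<s^2. measure_pmf.expectation P g) / real (s^2)"
    by (simp add: integral_sum int)
  also have "\<dots> = measure_pmf.expectation P g"
    using s by simp
  finally show ?thesis .
qed

definition expected_cost :: "nat \<Rightarrow> nat \<Rightarrow> nat \<Rightarrow> nat pmf \<Rightarrow> real" where
  "expected_cost s m L P = measure_pmf.expectation (pair_pmf (placement_pmf s m P) (requests_pmf s P))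
                             (\<lambda>(X, R). overall_cost s m L X R)"

lemma overall_cost_typical:
  assumes R: "\<forall>r<s^2. fst (R r) \<in> grid s \<and> snd (R r) \<in> {1..K}" and "s \<ge> 1"
    and X: "X \<in> typical_placements s m L K P a1 a2"
  defines "h \<equiv> (\<Sum>r<s^2. cost_scale P m L (snd (R r))) / real (s^2)"
  shows "a1 * h \<le> overall_cost s m L X R" and "overall_cost s m L X R \<le> a2 * h"
proof -
  let ?n = "s^2" and ?c = "\<lambda>r. req_cost s m L X (fst (R r)) (snd (R r))"
  have "(\<Sum>r<?n. a1 * cost_scale P m L (snd (R r))) \<le> (\<Sum>r<?n. ?c r)"
    and "(\<Sum>r<?n. ?c r) \<le> (\<Sum>r<?n. a2 * cost_scale P m L (snd (R r)))"
    using R X unfolding typical_placements_def by (auto intro!: sum_mono)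
  moreover have "a1 * h = (\<Sum>r<?n. a1 * cost_scale P m L (snd (R r))) / real ?n"
    and "a2 * h = (\<Sum>r<?n. a2 * cost_scale P m L (snd (R r))) / real ?n"
    unfolding h_def by (simp_all add: sum_distrib_left)
  ultimately show "a1 * h \<le> overall_cost s m L X R" and "overall_cost s m L X R \<le> a2 * h"
    unfolding overall_cost_def by (simp_all add: divide_right_mono)
qed

lemma overall_cost_le_diameter:
  assumes R: "\<forall>r<s^2. fst (R r) \<in> grid s" and "s \<ge> 1" and "L \<ge> 1"
  shows "0 \<le> overall_cost s m L X R" and "overall_cost s m L X R \<le> 2 * real s"
proof -
  let ?n = "s^2" and ?c = "\<lambda>r. req_cost s m L X (fst (R r)) (snd (R r))"
  have n: "real ?n > 0"
    using \<open>s \<ge> 1\<close> by simp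
  have c: "0 \<le> ?c r \<and> ?c r \<le> 2 * real s" if "r < ?n" for r
    using req_cost_bounds[of "fst (R r)" s L m X "snd (R r)"] R that \<open>L \<ge> 1\<close> by auto
  then have "0 \<le> (\<Sum>r<?n. ?c r)"
    by (intro sum_nonneg) simp
  then show "0 \<le> overall_cost s m L X R"
    unfolding overall_cost_def by simp
  have "(\<Sum>r<?n. ?c r) \<le> (\<Sum>r<?n. 2 * real s)"
    using c by (intro sum_mono) simp
  also have "\<dots> = 2 * real s * real ?n"
    by simp
  finally show "overall_cost s m L X R \<le> 2 * real s"
    unfolding overall_cost_def by (rule pos_divide_le_eq[OF n, THEN iffD2])
qed

text \<open>Off the typical placements (\<beta> = 1) only the diameter bound is available.\<close>
lemma overall_cost_bounds:
  fixes X :: "(nat \<times> nat) \<times> nat \<Rightarrow> nat"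
  assumes R: "\<forall>r<s^2. fst (R r) \<in> grid s \<and> snd (R r) \<in> {1..K}" and s: "s \<ge> 1" and L: "L \<ge> 1"
    and a: "0 \<le> a1" "0 \<le> a2" and scale: "\<forall>j\<in>{1..K}. cost_scale P m L j \<le> real s"
  defines "h \<equiv> (\<Sum>r<s^2. cost_scale P m L (snd (R r))) / real (s^2)"
    and "\<beta> \<equiv> indicator (- typical_placements s m L K P a1 a2) X :: real"
  shows "a1 * h - a1 * real s * \<beta> \<le> overall_cost s m L X R"
    and "overall_cost s m L X R \<le> a2 * h + 2 * real s * \<beta>"
proof -
  let ?n = "s^2"
  have n: "real ?n > 0"
    using s by simp
  have "0 \<le> h"
    unfolding h_def using R n by (intro divide_nonneg_pos sum_nonneg cost_scale_nonneg)
  have "(\<Sum>r<?n. cost_scale P m L (snd (R r))) \<le> (\<Sum>r<?n. real s)"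
    using scale R by (intro sum_mono) auto
  also have "\<dots> = real s * real ?n"
    by simp
  finally have "h \<le> real s"
    unfolding h_def by (rule pos_divide_le_eq[OF n, THEN iffD2])
  show "a1 * h - a1 * real s * \<beta> \<le> overall_cost s m L X R"
    and "overall_cost s m L X R \<le> a2 * h + 2 * real s * \<beta>"
  proof (atomize (full), cases "X \<in> typical_placements s m L K P a1 a2")
    case True
    then show "a1 * h - a1 * real s * \<beta> \<le> overall_cost s m L X R
        \<and> overall_cost s m L X R \<le> a2 * h + 2 * real s * \<beta>"
      using overall_cost_typical[OF R s True] unfolding h_def \<beta>_def by simp
  next
    case False
    have "a1 * h \<le> a1 * real s"
      using \<open>h \<le> real s\<close> a(1) by (rule mult_left_mono)
    moreover have "0 \<le> a2 * h"
      using \<open>0 \<le> h\<close> a(2) by simp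
    ultimately show "a1 * h - a1 * real s * \<beta> \<le> overall_cost s m L X R
        \<and> overall_cost s m L X R \<le> a2 * h + 2 * real s * \<beta>"
      using overall_cost_le_diameter[of s R L m X] R s L False unfolding \<beta>_def by auto
  qed
qed

lemma expected_cost_bounds:
  assumes s: "s \<ge> 1" and L: "L \<ge> 1" and supp: "set_pmf P \<subseteq> {1..K}" and a: "0 \<le> a1" "0 \<le> a2"
    and scale: "\<forall>j\<in>{1..K}. cost_scale P m L j \<le> real s"
  defines "\<Sigma> \<equiv> \<Sum>j=1..K. cost_scale P m L j * pmf P j"
    and "\<beta> \<equiv> 1 - measure_pmf.prob (placement_pmf s m P) (typical_placements s m L K P a1 a2)"
  shows "a1 * \<Sigma> - a1 * real s * \<beta> \<le> expected_cost s m L P"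
    and "expected_cost s m L P \<le> a2 * \<Sigma> + 2 * real s * \<beta>"
proof -
  let ?PL = "placement_pmf s m P" and ?RQ = "requests_pmf s P"
  let ?G = "typical_placements s m L K P a1 a2"
  define h where "h R = (\<Sum>r<s^2. cost_scale P m L (snd (R r))) / real (s^2)" for R :: "nat \<Rightarrow> (nat \<times> nat) \<times> nat"
  define atypical where "atypical X = (indicator (- ?G) X :: real)" for X
  have fP: "finite (set_pmf P)"
    using supp finite_subset by blast
  have int: "integrable (measure_pmf (pair_pmf ?PL ?RQ)) f" for f :: "_ \<Rightarrow> real"
    using finite_set_placement_pmf[OF fP] finite_set_requests_pmf[OF fP s]
    by (intro integrable_measure_pmf_finite) simp
  have "measure_pmf.expectation ?RQ h = measure_pmf.expectation P (cost_scale P m L)"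
    unfolding h_def by (rule expectation_requests_mean[OF s fP])
  also have "\<dots> = \<Sigma>"
    unfolding \<Sigma>_def by (rule integral_measure_pmf_real) (use supp in auto)
  finally have Eh: "measure_pmf.expectation ?RQ h = \<Sigma>" .
  have Eatypical: "measure_pmf.expectation ?PL atypical = \<beta>"
    unfolding atypical_def \<beta>_def
    using measure_pmf.prob_compl[of ?G ?PL] by (simp add: Compl_eq_Diff_UNIV)
  have pointwise: "a1 * h R - a1 * real s * atypical X \<le> overall_cost s m L X R"
    "overall_cost s m L X R \<le> a2 * h R + 2 * real s * atypical X"
    if "(X, R) \<in> set_pmf (pair_pmf ?PL ?RQ)" for X R
  proof -
    have "R \<in> set_pmf ?RQ"
      using that by simp
    then have "\<forall>r<s^2. fst (R r) \<in> grid s \<and> snd (R r) \<in> {1..K}"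
      using set_requests_pmf[OF _ _ s] supp by blast
    then show "a1 * h R - a1 * real s * atypical X \<le> overall_cost s m L X R"
      "overall_cost s m L X R \<le> a2 * h R + 2 * real s * atypical X"
      unfolding h_def atypical_def using overall_cost_bounds s L a scale by blast+
  qed
  have "a1 * \<Sigma> - a1 * real s * \<beta>
      = measure_pmf.expectation (pair_pmf ?PL ?RQ) (\<lambda>x. a1 * h (snd x) - a1 * real s * atypical (fst x))"
    by (simp add: int Eh Eatypical)
  also have "\<dots> \<le> expected_cost s m L P"
    unfolding expected_cost_def using pointwise(1) by (intro integral_mono_AE int AE_pmfI) auto
  finally show "a1 * \<Sigma> - a1 * real s * \<beta> \<le> expected_cost s m L P" .
  have "expected_cost s m L P
      \<le> measure_pmf.expectation (pair_pmf ?PL ?RQ) (\<lambda>x. a2 * h (snd x) + 2 * real s * atypical (fst x))"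
    unfolding expected_cost_def using pointwise(2) by (intro integral_mono_AE int AE_pmfI) auto
  also have "\<dots> = a2 * \<Sigma> + 2 * real s * \<beta>"
    by (simp add: int Eh Eatypical)
  finally show "expected_cost s m L P \<le> a2 * \<Sigma> + 2 * real s * \<beta>" .
qed

text \<open>With failure probability at most 1/s^2 the atypical placements, whose cost is at most
  the diameter 2 s, contribute O(1/s); this is absorbed since the mean scale is at least 1.\<close>
lemma expected_cost_Theta:
  assumes s: "s \<ge> 4" and L: "L \<ge> 1" and supp: "set_pmf P \<subseteq> {1..K}"
    and q: "\<forall>j\<in>{1..K}. ptilde P m j > 0" and a: "0 \<le> a1" "0 \<le> a2"
    and scale: "\<forall>j\<in>{1..K}. cost_scale P m L j \<le> real s"
    and whp: "1 - 1 / real (s^2) \<le> measure_pmf.prob (placement_pmf s m P) (typical_placements s m L K P a1 a2)"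
  defines "\<Sigma> \<equiv> \<Sum>j=1..K. cost_scale P m L j * pmf P j"
  shows "a1 / 2 * \<Sigma> \<le> expected_cost s m L P \<and> expected_cost s m L P \<le> (a2 + 1) * \<Sigma>"
proof -
  define \<beta> where "\<beta> = 1 - measure_pmf.prob (placement_pmf s m P) (typical_placements s m L K P a1 a2)"
  have "\<Sigma> \<ge> (\<Sum>j=1..K. pmf P j)"
    unfolding \<Sigma>_def using cost_scale_ge_1[OF L] q
    by (intro sum_mono) (simp add: mult_le_cancel_right1)
  then have \<Sigma>: "\<Sigma> \<ge> 1"
    using sum_pmf_eq_1[OF _ supp] by simp
  have "0 \<le> \<beta>"
    unfolding \<beta>_def by simp
  then have "real s * \<beta> \<le> real s * (1 / real (s^2))"
    using whp unfolding \<beta>_def by (intro mult_left_mono) auto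
  also have "\<dots> \<le> 1 / 4"
    using s by (simp add: power2_eq_square divide_le_eq)
  finally have s\<beta>: "real s * \<beta> \<le> 1 / 4" .
  have "a1 * (real s * \<beta>) \<le> a1 / 4"
    using mult_left_mono[OF s\<beta> a(1)] by simp
  moreover have "a1 \<le> a1 * \<Sigma>"
    using mult_left_mono[OF \<Sigma> a(1)] by simp
  moreover have "a1 / 2 * \<Sigma> = a1 * \<Sigma> / 2"
    by simp
  ultimately have "a1 / 2 * \<Sigma> \<le> a1 * \<Sigma> - a1 * (real s * \<beta>)"
    using a(1) by linarith
  also have "\<dots> \<le> expected_cost s m L P"
    using expected_cost_bounds(1)[OF _ L supp a scale] s unfolding \<Sigma>_def \<beta>_def by (simp add: mult.assoc)
  finally have "a1 / 2 * \<Sigma> \<le> expected_cost s m L P" .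
  moreover have "expected_cost s m L P \<le> a2 * \<Sigma> + 2 * (real s * \<beta>)"
    using expected_cost_bounds(2)[OF _ L supp a scale] s unfolding \<Sigma>_def \<beta>_def by (simp add: mult.assoc)
  then have "expected_cost s m L P \<le> (a2 + 1) * \<Sigma>"
    using s\<beta> \<Sigma> by (simp add: algebra_simps)
  ultimately show ?thesis ..
qed

lemma failure_exponents_le:
  fixes L A \<gamma> T \<delta> :: real
  assumes "0 \<le> L" and "A^2 = 2 * \<gamma> + 2" and "T = 2 * \<gamma> + 1" and "\<delta>^2 = exp (- T) / 32"
  shows "exp (L - A^2 / 2 * L) + exp (- T * (L / 2) + (8 * \<delta>^2 * L + 2) * exp T)
         \<le> (1 + exp (2 * exp T)) * exp (- \<gamma> * L)"
proof -
  have E2: "exp (L - A^2 / 2 * L) = exp (- \<gamma> * L)"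
    using assms(2) by (simp add: algebra_simps)
  have "8 * \<delta>^2 * exp T = 1 / 4"
    using assms(4) by (simp add: exp_minus field_simps)
  then have "- T * (L / 2) + (8 * \<delta>^2 * L + 2) * exp T = 2 * exp T - \<gamma> * L - L / 4"
    using assms(3) by (simp add: algebra_simps)
  then have "exp (- T * (L / 2) + (8 * \<delta>^2 * L + 2) * exp T) \<le> exp (2 * exp T) * exp (- \<gamma> * L)"
    using assms(1) by (simp add: exp_add[symmetric])
  with E2 show ?thesis
    by (simp only: distrib_right mult_1)
qed

lemma scaled_failure_le_inverse:
  fixes n k C D \<gamma> L :: real
  assumes "n \<ge> 1" and "\<gamma> * L \<ge> 4 * ln n" and "0 \<le> k" "k \<le> C * n" and "C * D \<le> n"
    and "C > 0" "D \<ge> 0"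
  shows "n * k * (D * exp (- \<gamma> * L)) \<le> 1 / n"
proof -
  have "exp (- \<gamma> * L) \<le> exp (- (4 * ln n))"
    using assms(2) by simp
  also have "\<dots> = 1 / n^4"
  proof -
    have "4 * ln n = ln (n^4)"
      using assms(1) by (simp add: ln_realpow)
    then show ?thesis
      using assms(1) by (simp add: exp_minus inverse_eq_divide)
  qed
  finally have "n * k * (D * exp (- \<gamma> * L)) \<le> n * (C * n) * (D * (1 / n^4))"
    using assms by (intro mult_mono mult_left_mono) auto
  also have "\<dots> = C * D / n^2"
    using assms(1) by (simp add: power2_eq_square power4_eq_xxxx field_simps)
  also have "\<dots> \<le> n / n^2"
    using assms(1,5) by (intro divide_right_mono) auto
  also have "\<dots> = 1 / n"
    using assms(1) by (simp add: power2_eq_square)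
  finally show ?thesis .
qed

lemma prob_typical_placements_ge_inverse:
  assumes s: "s \<ge> 4" and L: "L \<ge> 1" and q: "\<forall>j\<in>{1..K}. ptilde P m j > 0" and "\<gamma> \<ge> 0"
    and A: "A^2 = 2 * \<gamma> + 2" "A \<ge> 1" and T: "T = 2 * \<gamma> + 1"
    and \<delta>: "\<delta>^2 = exp (- T) / 32" "0 < \<delta>" "\<delta> \<le> 1"
    and Ac: "\<forall>j\<in>{1..K}. A * cost_scale P m L j \<le> real s / 2"
    and \<gamma>L: "4 * ln (real (s^2)) \<le> \<gamma> * real L"
    and C: "C > 0" "real K \<le> C * real (s^2)" "C * (1 + exp (2 * exp T)) \<le> real s"
  shows "1 - 1 / real (s^2) \<le> measure_pmf.prob (placement_pmf s m P)
                                (typical_placements s m L K P (\<delta> / 2) (4 * A))"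
proof -
  let ?n = "real (s^2)"
  let ?E = "exp (real L - A^2 / 2 * real L) + exp (- T * (real L / 2) + (8 * \<delta>^2 * real L + 2) * exp T)"
  have "?E \<le> (1 + exp (2 * exp T)) * exp (- \<gamma> * real L)"
    by (rule failure_exponents_le[OF _ A(1) T \<delta>(1)]) simp
  then have "?n * real K * ?E \<le> ?n * real K * ((1 + exp (2 * exp T)) * exp (- \<gamma> * real L))"
    by (intro mult_left_mono) auto
  also have "\<dots> \<le> 1 / ?n"
  proof (rule scaled_failure_le_inverse)
    have "real s \<le> ?n"
      using s by (simp add: power2_eq_square)
    then show "C * (1 + exp (2 * exp T)) \<le> ?n"
      using C(3) by linarith
  qed (use s \<gamma>L C in \<open>auto intro: add_nonneg_nonneg\<close>)
  finally have "?n * real K * ?E \<le> 1 / ?n" .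
  moreover have "T > 0"
    using T \<open>\<gamma> \<ge> 0\<close> by simp
  then have "1 - ?n * real K * ?E
      \<le> measure_pmf.prob (placement_pmf s m P) (typical_placements s m L K P (\<delta> / 2) (4 * A))"
    by (rule prob_typical_placements_ge[OF s L q A(2) \<delta>(2,3) _ Ac])
  ultimately show ?thesis
    by linarith
qed

text \<open>The union bound over the s^2 K pairs (u, j) needs an exponent \<gamma> L \<ge> 4 ln n, which
  holds for \<gamma> = 4 / \<kappa> when L \<ge> \<kappa> ln n; A, T and \<delta> are then chosen so that both Chernoff
  bounds decay like exp (- \<gamma> L).\<close>
lemma eventually_prob_typical_placements_ge:
  fixes K L m :: "nat \<Rightarrow> nat" and P :: "nat \<Rightarrow> nat pmf"
  assumes K_bigO: "(\<lambda>s. real (K s)) \<in> O(\<lambda>s. real (s^2))"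
    and L_pos: "\<forall>s. L s \<ge> 1"
    and L_Omega: "(\<lambda>s. real (L s)) \<in> \<Omega>(\<lambda>s. ln (real (s^2)))"
    and pt_pos: "\<forall>s. \<forall>j\<in>{1..K s}. ptilde (P s) (m s) j > 0"
    and small: "\<forall>\<epsilon>>0. \<forall>\<^sub>F s in sequentially. \<forall>j\<in>{1..K s}. cost_scale (P s) (m s) (L s) j \<le> \<epsilon> * real s"
  shows "\<exists>a1>0. \<exists>a2>0. \<forall>\<^sub>F s in sequentially.
           1 - 1 / real (s^2) \<le> measure_pmf.prob (placement_pmf s (m s) (P s))
                                   (typical_placements s (m s) (L s) (K s) (P s) a1 a2)"
proof -
  obtain \<kappa> where \<kappa>: "\<kappa> > 0"
    and evL: "\<forall>\<^sub>F s in sequentially. \<kappa> * norm (ln (real (s^2))) \<le> norm (real (L s))"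
    using L_Omega unfolding bigomega_def by auto
  obtain C where C: "C > 0" and evK: "\<forall>\<^sub>F s in sequentially. norm (real (K s)) \<le> C * norm (real (s^2))"
    using K_bigO unfolding bigo_def by auto
  define \<gamma> where "\<gamma> = 4 / \<kappa>"
  define A where "A = sqrt (2 * \<gamma> + 2)"
  define T where "T = 2 * \<gamma> + 1"
  define \<delta> where "\<delta> = sqrt (exp (- T) / 32)"
  have "\<gamma> \<ge> 0"
    unfolding \<gamma>_def using \<kappa> by simp
  then have A: "A^2 = 2 * \<gamma> + 2" "A \<ge> 1" and "exp (- T) \<le> 1"
    unfolding A_def T_def by simp_all
  then have \<delta>: "\<delta>^2 = exp (- T) / 32" "0 < \<delta>" "\<delta> \<le> 1"
    unfolding \<delta>_def by (simp_all only: real_sqrt_le_1_iff) simp_all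
  have "1 / (2 * A) > 0"
    using A(2) by simp
  have "\<forall>\<^sub>F s in sequentially. 1 - 1 / real (s^2) \<le> measure_pmf.prob (placement_pmf s (m s) (P s))
                                   (typical_placements s (m s) (L s) (K s) (P s) (\<delta> / 2) (4 * A))"
    using evL evK small[rule_format, OF \<open>1 / (2 * A) > 0\<close>]
      eventually_ge_at_top[of "max 4 (nat \<lceil>C * (1 + exp (2 * exp T))\<rceil>)"]
  proof eventually_elim
    case (elim s)
    have s: "s \<ge> 4"
      using elim(4) by simp
    have "\<gamma> * (\<kappa> * ln (real (s^2))) \<le> \<gamma> * real (L s)"
      using elim(1) s \<open>\<gamma> \<ge> 0\<close> by (intro mult_left_mono) auto
    then have "4 * ln (real (s^2)) \<le> \<gamma> * real (L s)"
      using \<kappa> by (simp add: \<gamma>_def)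
    moreover have "C * (1 + exp (2 * exp T)) \<le> real s"
      using elim(4) by linarith
    moreover have "A * cost_scale (P s) (m s) (L s) j \<le> real s / 2" if "j \<in> {1..K s}" for j
    proof -
      have "A * cost_scale (P s) (m s) (L s) j \<le> A * (1 / (2 * A) * real s)"
        using elim(3) that A(2) by (intro mult_left_mono) auto
      then show ?thesis
        using A(2) by simp
    qed
    ultimately show ?case
      by (intro prob_typical_placements_ge_inverse[OF s _ _ \<open>\<gamma> \<ge> 0\<close> A T_def \<delta>])
        (use elim(2) C L_pos pt_pos in auto)
  qed
  then show ?thesis
    using \<delta>(2) A(2) by (intro exI[of _ "\<delta> / 2"] conjI exI[of _ "4 * A"]) auto
qed

theorem theorem3:
  fixes K l :: "nat \<Rightarrow> nat" and M :: "nat \<Rightarrow> real" and P :: "nat \<Rightarrow> nat pmf"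
  assumes K_pos: "\<forall>s. K s \<ge> 1"
    and P_supp: "\<forall>s. set_pmf (P s) \<subseteq> {1..K s}"
    and K_bigO: "(\<lambda>s. real (K s)) \<in> O(\<lambda>s. real (s^2))"
    and l_pos: "\<forall>s. l s \<ge> 1"
    and l_Omega: "(\<lambda>s. real (l s)) \<in> \<Omega>(\<lambda>s. ln (real (s^2)))"
    and M_cache: "\<forall>s. M s \<ge> 0 \<and> M s * real (l s) \<in> \<nat>"
    and pt_pos: "\<forall>s. \<forall>j\<in>{1..K s}. ptilde (P s) (nslots (M s) (l s)) j > 0"
    and small: "\<forall>\<epsilon>>0. \<forall>\<^sub>F s in sequentially. \<forall>j\<in>{1..K s}.
                  sqrt (real (l s) / ptilde (P s) (nslots (M s) (l s)) j) \<le> \<epsilon> * sqrt (real (s^2))"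
  shows "(\<exists>c>0. \<exists>a1>0. \<exists>a2>0. \<forall>\<^sub>F s in sequentially.
            measure_pmf.prob (placement_pmf s (nslots (M s) (l s)) (P s))
              {X. \<forall>u\<in>grid s. \<forall>j\<in>{1..K s}.
                  a1 * sqrt (real (l s) / ptilde (P s) (nslots (M s) (l s)) j)
                    \<le> req_cost s (nslots (M s) (l s)) (l s) X u j
                \<and> req_cost s (nslots (M s) (l s)) (l s) X u j
                    \<le> a2 * sqrt (real (l s) / ptilde (P s) (nslots (M s) (l s)) j)}
            \<ge> 1 - 1 / real (s^2) powr c)
       \<and> (\<exists>a1>0. \<exists>a2>0. \<forall>\<^sub>F s in sequentially.
            a1 * (\<Sum>j=1..K s. sqrt (real (l s) / ptilde (P s) (nslots (M s) (l s)) j) * pmf (P s) j)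
              \<le> measure_pmf.expectation
                   (pair_pmf (placement_pmf s (nslots (M s) (l s)) (P s)) (requests_pmf s (P s)))
                   (\<lambda>(X, R). overall_cost s (nslots (M s) (l s)) (l s) X R)
          \<and> measure_pmf.expectation
                   (pair_pmf (placement_pmf s (nslots (M s) (l s)) (P s)) (requests_pmf s (P s)))
                   (\<lambda>(X, R). overall_cost s (nslots (M s) (l s)) (l s) X R)
              \<le> a2 * (\<Sum>j=1..K s. sqrt (real (l s) / ptilde (P s) (nslots (M s) (l s)) j) * pmf (P s) j))"
proof -
  define m where "m s = nslots (M s) (l s)" for s
  have small': "\<forall>\<epsilon>>0. \<forall>\<^sub>F s in sequentially. \<forall>j\<in>{1..K s}. cost_scale (P s) (m s) (l s) j \<le> \<epsilon> * real s"
    using small by (simp add: cost_scale_def m_def)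
  obtain a1 a2 where a: "a1 > 0" "a2 > 0" and whp: "\<forall>\<^sub>F s in sequentially.
      1 - 1 / real (s^2) \<le> measure_pmf.prob (placement_pmf s (m s) (P s))
                              (typical_placements s (m s) (l s) (K s) (P s) a1 a2)"
    using eventually_prob_typical_placements_ge[OF K_bigO l_pos l_Omega _ small'] pt_pos
    unfolding m_def by blast
  have "\<forall>\<^sub>F s in sequentially. a1 / 2 * (\<Sum>j=1..K s. cost_scale (P s) (m s) (l s) j * pmf (P s) j)
            \<le> expected_cost s (m s) (l s) (P s)
          \<and> expected_cost s (m s) (l s) (P s)
            \<le> (a2 + 1) * (\<Sum>j=1..K s. cost_scale (P s) (m s) (l s) j * pmf (P s) j)"
    using whp small'[rule_format, OF zero_less_one] eventually_ge_at_top[of 4]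
  proof eventually_elim
    case (elim s)
    show ?case
      by (rule expected_cost_Theta) (use elim a l_pos P_supp pt_pos in \<open>auto simp: m_def\<close>)
  qed
  moreover have "\<forall>\<^sub>F s in sequentially. 1 - 1 / real (s^2) powr 1
      \<le> measure_pmf.prob (placement_pmf s (m s) (P s)) (typical_placements s (m s) (l s) (K s) (P s) a1 a2)"
    using whp by simp
  ultimately show ?thesis
    unfolding expected_cost_def typical_placements_def cost_scale_def m_def
    using a half_gt_zero[OF a(1)] add_pos_pos[OF a(2) zero_less_one] zero_less_one by blast
qed
end
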